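(* Let $H$ be the graph consisting of two triangles $uv_1v_2$ and $uw_1w_2$ sharing exactly the vertex $u$. Let $G$ be a graph with $n$ vertices obtained from $H$ by attaching $k\ge1$ pendant edges (new leaves) to vertices of $H$, none of them to $u$, such that the pendant edges are attached to exactly $d$ of the vertices $v_1,v_2,w_1,w_2$, where $1\le d\le 4$. If $d\ge 2$, then $\operatorname{avm}(G)>\operatorname{avm}(R_n(3,3))$.
   Context: $\operatorname{avm}(G)$ is the average of $|M|$ over all maximal matchings $M$ of $G$ (a matching is maximal if not properly contained in another matching). For $n\ge 6$, $R_n(3,3)$ is the graph obtained from $H$ by attaching $n-5$ pendant edges (new leaves) to $v_1$. *)

theory Defs
  imports Complex_Main
begin

text \<open>Simple graphs are given by their edge sets (2-element vertex sets).\<close>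

definition matching :: "'a set set \<Rightarrow> 'a set set \<Rightarrow> bool" where
  "matching E M \<longleftrightarrow> M \<subseteq> E \<and> (\<forall>e\<in>M. \<forall>f\<in>M. e \<noteq> f \<longrightarrow> e \<inter> f = {})"

definition maximal_matching :: "'a set set \<Rightarrow> 'a set set \<Rightarrow> bool" where
  "maximal_matching E M \<longleftrightarrow> matching E M \<and> \<not> (\<exists>M'. matching E M' \<and> M \<subset> M')"

definition avm :: "'a set set \<Rightarrow> real" where
  "avm E = (\<Sum>M\<in>{M. maximal_matching E M}. real (card M)) / real (card {M. maximal_matching E M})"

text \<open>Vertices are pairs: (0,0) = u, (1,0) = v1, (2,0) = v2, (3,0) = w1, (4,0) = w2;
  (i,j) with j \<ge> 1 is the j-th pendant leaf attached to (i,0).\<close>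

definition H_edges :: "(nat \<times> nat) set set" where
  "H_edges = {{(0,0),(1,0)}, {(0,0),(2,0)}, {(1,0),(2,0)},
              {(0,0),(3,0)}, {(0,0),(4,0)}, {(3,0),(4,0)}}"

definition pendant_graph :: "(nat \<Rightarrow> nat) \<Rightarrow> (nat \<times> nat) set set" where
  "pendant_graph c = H_edges \<union> {{(i,0),(i,j)} | i j. i \<in> {1..4} \<and> 1 \<le> j \<and> j \<le> c i}"

definition R33 :: "nat \<Rightarrow> (nat \<times> nat) set set" where
  "R33 n = pendant_graph (\<lambda>i. if i = 1 then n - 5 else 0)"

end

theory Submission
  imports Defs "HOL-Library.FuncSet"
begin

text \<open>
  Hang leaves on some vertices (hubs) of a base graph. A maximal matching M then restricts to a
  matching m of the base which, together with the hubs, touches every base edge (a leaf can only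
  be covered through its hub, so every hub is covered by M); conversely such an m extends to M
  exactly by picking one leaf at each hub that m leaves uncovered. Hence the number of maximal
  matchings and their total size are weighted sums over these finitely many m, with weights
  products of the leaf counts c i. For the bowtie these sums are explicit polynomials in the c i:
  for R_n(3,3), with k = n - 5 leaves at v1, there are 3k + 4 maximal matchings of total size
  7k + 8, so the average stays below 7/3; as soon as two of v1, v2, w1, w2 carry leaves the
  average exceeds 7/3.
\<close>

lemma maximal_matching_iff_covers:
  assumes "{} \<notin> E"
  shows "maximal_matching E M \<longleftrightarrow> matching E M \<and> (\<forall>e\<in>E. e \<inter> \<Union>M \<noteq> {})"
proof
  assume max: "maximal_matching E M"
  then have M: "matching E M" by (simp add: maximal_matching_def)
  have "e \<inter> \<Union>M \<noteq> {}" if e: "e \<in> E" for e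
  proof
    assume untouched: "e \<inter> \<Union>M = {}"
    have "e \<noteq> {}" using assms e by blast
    then have "e \<notin> M" using untouched by blast
    moreover have "e \<inter> g = {}" if "g \<in> M" for g
      using untouched that by blast
    then have "matching E (insert e M)"
      using M e unfolding matching_def by (auto simp: Int_commute)
    ultimately show False using max unfolding maximal_matching_def by blast
  qed
  with M show "matching E M \<and> (\<forall>e\<in>E. e \<inter> \<Union>M \<noteq> {})" by blast
next
  assume cov: "matching E M \<and> (\<forall>e\<in>E. e \<inter> \<Union>M \<noteq> {})"
  show "maximal_matching E M"
    unfolding maximal_matching_def
  proof (intro conjI notI)
    show "matching E M" using cov by blast
    assume "\<exists>M'. matching E M' \<and> M \<subset> M'"
    then obtain M' e where M': "matching E M'" "M \<subset> M'" and e: "e \<in> M'" "e \<notin> M" by blast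
    then have "e \<in> E" unfolding matching_def by blast
    then obtain g where g: "g \<in> M" "e \<inter> g \<noteq> {}" using cov by blast
    then have "g \<in> M'" "g \<noteq> e" using e M' by auto
    then have "e \<inter> g = {}" using M' e unfolding matching_def by blast
    with g show False by blast
  qed
qed

definition pendant :: "nat \<Rightarrow> nat \<Rightarrow> (nat \<times> nat) set" where
  "pendant i j = {(i,0), (i,j)}"

definition pendant_edges :: "nat set \<Rightarrow> (nat \<Rightarrow> nat) \<Rightarrow> (nat \<times> nat) set set" where
  "pendant_edges I c = {pendant i j | i j. i \<in> I \<and> 1 \<le> j \<and> j \<le> c i}"

lemma pendant_eq_iff:
  assumes "1 \<le> j'"
  shows "pendant i j = pendant i' j' \<longleftrightarrow> i = i' \<and> j = j'"
  using assms unfolding pendant_def doubleton_eq_iff by auto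

lemma pendant_disjoint: "pendant i j \<inter> pendant i' j' \<noteq> {} \<Longrightarrow> i = i'"
  by (auto simp: pendant_def)

lemma hub_in_pendant: "(i,0) \<in> pendant i j"
  by (simp add: pendant_def)

lemma mem_pendant_edges:
  "e \<in> pendant_edges I c \<longleftrightarrow> (\<exists>i j. e = pendant i j \<and> i \<in> I \<and> 1 \<le> j \<and> j \<le> c i)"
  by (auto simp: pendant_edges_def)

locale pendant_extension =
  fixes B :: "(nat \<times> nat) set set" and I :: "nat set" and c :: "nat \<Rightarrow> nat"
  assumes finite_B: "finite B" and finite_I: "finite I"
    and nonempty_edges: "{} \<notin> B" and base_vertices: "\<Union>B \<subseteq> UNIV \<times> {0}"
begin

abbreviation G :: "(nat \<times> nat) set set" where
  "G \<equiv> B \<union> pendant_edges I c"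

definition hubs :: "(nat \<times> nat) set" where
  "hubs = {(i,0) | i. i \<in> I \<and> 0 < c i}"

definition admissible :: "(nat \<times> nat) set set \<Rightarrow> bool" where
  "admissible m \<longleftrightarrow> matching B m \<and> (\<forall>e\<in>B. e \<inter> (\<Union>m \<union> hubs) \<noteq> {})"

definition free_hubs :: "(nat \<times> nat) set set \<Rightarrow> nat set" where
  "free_hubs m = {i \<in> I. 0 < c i \<and> (i,0) \<notin> \<Union>m}"

definition extend :: "(nat \<times> nat) set set \<Rightarrow> (nat \<Rightarrow> nat) \<Rightarrow> (nat \<times> nat) set set" where
  "extend m f = m \<union> (\<lambda>i. pendant i (f i)) ` free_hubs m"

definition choices :: "(nat \<times> nat) set set \<Rightarrow> (nat \<Rightarrow> nat) set" where
  "choices m = (\<Pi>\<^sub>E i\<in>free_hubs m. {1..c i})"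

lemma base_vertex: "e \<in> B \<Longrightarrow> x \<in> e \<Longrightarrow> snd x = 0"
  using base_vertices by fastforce

lemma choices_range: "f \<in> choices m \<Longrightarrow> i \<in> free_hubs m \<Longrightarrow> 1 \<le> f i \<and> f i \<le> c i"
  unfolding choices_def using PiE_mem by fastforce

lemma pendant_notin_base: "1 \<le> j \<Longrightarrow> pendant i j \<notin> B"
  using base_vertex[of "pendant i j" "(i,j)"] by (auto simp: pendant_def)

lemma base_meets_pendant: "e \<in> B \<Longrightarrow> x \<in> e \<Longrightarrow> x \<in> pendant i j \<Longrightarrow> x = (i,0)"
  using base_vertex by (fastforce simp: pendant_def)

lemma nonempty_graph_edges: "{} \<notin> G"
  using nonempty_edges by (auto simp: mem_pendant_edges pendant_def)

lemma admissible_subset: "admissible m \<Longrightarrow> m \<subseteq> B"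
  by (simp add: admissible_def matching_def)

lemma finite_free_hubs: "finite (free_hubs m)"
  using finite_I by (simp add: free_hubs_def)

lemma hubs_subset_extend: "hubs \<subseteq> \<Union>(extend m f)"
proof
  fix x assume "x \<in> hubs"
  then obtain i where x: "x = (i,0)" "i \<in> I" "0 < c i" by (auto simp: hubs_def)
  show "x \<in> \<Union>(extend m f)"
  proof (cases "i \<in> free_hubs m")
    case True
    then show ?thesis using x hub_in_pendant by (auto simp: extend_def)
  next
    case False
    then show ?thesis using x by (auto simp: free_hubs_def extend_def)
  qed
qed

lemma extend_matching:
  assumes m: "admissible m" and f: "f \<in> choices m"
  shows "matching G (extend m f)"
  unfolding matching_def
proof (intro conjI ballI impI)
  have mB: "m \<subseteq> B" using m by (rule admissible_subset)
  have "pendant i (f i) \<in> pendant_edges I c" if "i \<in> free_hubs m" for i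
    using choices_range[OF f that] that by (auto simp: mem_pendant_edges free_hubs_def)
  then show "extend m f \<subseteq> G"
    using mB by (auto simp: extend_def)
  fix g h assume g: "g \<in> extend m f" and h: "h \<in> extend m f" and "g \<noteq> h"
  have base_pendant: "g \<inter> pendant i (f i) = {}" if "g \<in> m" "i \<in> free_hubs m" for g i
  proof -
    have "(i,0) \<notin> g" using that by (auto simp: free_hubs_def)
    then show ?thesis using base_meets_pendant that(1) mB by blast
  qed
  consider "g \<in> m" "h \<in> m" | i where "g \<in> m" "i \<in> free_hubs m" "h = pendant i (f i)"
    | i where "h \<in> m" "i \<in> free_hubs m" "g = pendant i (f i)"
    | i i' where "g = pendant i (f i)" "h = pendant i' (f i')"
    using g h by (auto simp: extend_def)
  then show "g \<inter> h = {}"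
  proof cases
    case 1
    then show ?thesis using m \<open>g \<noteq> h\<close> by (simp add: admissible_def matching_def)
  next
    case 2
    then show ?thesis using base_pendant by simp
  next
    case 3
    then show ?thesis using base_pendant by blast
  next
    case 4
    then show ?thesis using \<open>g \<noteq> h\<close> pendant_disjoint by metis
  qed
qed

lemma extend_maximal:
  assumes m: "admissible m" and f: "f \<in> choices m"
  shows "maximal_matching G (extend m f)"
  unfolding maximal_matching_iff_covers[OF nonempty_graph_edges]
proof (intro conjI ballI)
  show "matching G (extend m f)" using m f by (rule extend_matching)
  fix e assume e: "e \<in> G"
  show "e \<inter> \<Union>(extend m f) \<noteq> {}"
  proof (cases "e \<in> B")
    case True
    then have "e \<inter> (\<Union>m \<union> hubs) \<noteq> {}" using m by (simp add: admissible_def)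
    moreover have "\<Union>m \<union> hubs \<subseteq> \<Union>(extend m f)"
      using hubs_subset_extend by (auto simp: extend_def)
    ultimately show ?thesis by blast
  next
    case False
    then obtain i j where "e = pendant i j" "i \<in> I" "j \<le> c i" "1 \<le> j"
      using e by (auto simp: mem_pendant_edges)
    then have "(i,0) \<in> e \<inter> hubs" by (auto simp: hubs_def hub_in_pendant)
    then show ?thesis using hubs_subset_extend by blast
  qed
qed

lemma maximal_edge_cases:
  assumes "maximal_matching G M" "g \<in> M" "g \<notin> B"
  obtains i j where "g = pendant i j" "i \<in> I" "1 \<le> j" "j \<le> c i"
proof -
  have "g \<in> pendant_edges I c" using assms by (auto simp: maximal_matching_def matching_def)
  then show ?thesis using that by (auto simp: mem_pendant_edges)
qed

lemma maximal_covers_hubs: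
  assumes max: "maximal_matching G M"
  shows "hubs \<subseteq> \<Union>M"
proof
  fix x assume "x \<in> hubs"
  then obtain i where x: "x = (i,0)" "i \<in> I" "0 < c i" by (auto simp: hubs_def)
  then have "pendant i 1 \<in> G"
    unfolding mem_pendant_edges Un_iff by (intro disjI2 exI[of _ i] exI[of _ 1]) simp
  then have "pendant i 1 \<inter> \<Union>M \<noteq> {}"
    using max by (simp add: maximal_matching_iff_covers[OF nonempty_graph_edges])
  then obtain y g where y: "y \<in> pendant i 1" "g \<in> M" "y \<in> g" by blast
  have "x \<in> g"
  proof (cases "g \<in> B")
    case True
    then show ?thesis using base_meets_pendant y x by blast
  next
    case False
    obtain i' j where g: "g = pendant i' j" "i' \<in> I" "1 \<le> j" "j \<le> c i'"
      using maximal_edge_cases[OF max y(2) False] .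
    then have "i' = i" using y pendant_disjoint by blast
    then show ?thesis using g x hub_in_pendant by simp
  qed
  then show "x \<in> \<Union>M" using y by blast
qed

lemma maximal_trace_admissible:
  assumes max: "maximal_matching G M"
  shows "admissible (M \<inter> B)"
  unfolding admissible_def
proof (intro conjI ballI)
  show "matching B (M \<inter> B)" using max by (auto simp: maximal_matching_def matching_def)
  fix e assume e: "e \<in> B"
  then have "e \<inter> \<Union>M \<noteq> {}"
    using max by (simp add: maximal_matching_iff_covers[OF nonempty_graph_edges])
  then obtain x g where x: "x \<in> e" "g \<in> M" "x \<in> g" by blast
  show "e \<inter> (\<Union>(M \<inter> B) \<union> hubs) \<noteq> {}"
  proof (cases "g \<in> B")
    case True
    then show ?thesis using x by blast
  next
    case False
    obtain i j where g: "g = pendant i j" "i \<in> I" "1 \<le> j" "j \<le> c i"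
      using maximal_edge_cases[OF max x(2) False] .
    then have "x = (i,0)" using base_meets_pendant e x by blast
    then have "x \<in> hubs" using g by (auto simp: hubs_def)
    then show ?thesis using x by blast
  qed
qed

lemma maximal_unique_pendant:
  assumes max: "maximal_matching G M" and i: "i \<in> free_hubs (M \<inter> B)"
  shows "\<exists>!j. pendant i j \<in> M \<and> 1 \<le> j \<and> j \<le> c i"
proof (rule ex_ex1I)
  have "(i,0) \<in> hubs" using i by (auto simp: free_hubs_def hubs_def)
  then obtain g where g: "g \<in> M" "(i,0) \<in> g" using maximal_covers_hubs[OF max] by blast
  have "g \<notin> B" using g i by (auto simp: free_hubs_def)
  then obtain i' j where j: "g = pendant i' j" "i' \<in> I" "1 \<le> j" "j \<le> c i'"
    using maximal_edge_cases[OF max g(1)] by blast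
  then have "i' = i" using g(2) hub_in_pendant pendant_disjoint by blast
  then show "\<exists>j. pendant i j \<in> M \<and> 1 \<le> j \<and> j \<le> c i" using g j by blast
next
  fix j j'
  assume j: "pendant i j \<in> M \<and> 1 \<le> j \<and> j \<le> c i"
    and j': "pendant i j' \<in> M \<and> 1 \<le> j' \<and> j' \<le> c i"
  moreover have "pendant i j \<inter> pendant i j' \<noteq> {}" using hub_in_pendant by blast
  ultimately have "pendant i j = pendant i j'"
    using max unfolding maximal_matching_def matching_def by blast
  then show "j = j'" using j' pendant_eq_iff by blast
qed

lemma maximal_eq_extend:
  assumes max: "maximal_matching G M"
  obtains f where "f \<in> choices (M \<inter> B)" "M = extend (M \<inter> B) f"
proof -
  define m where "m = M \<inter> B"
  define f where "f = restrict (\<lambda>i. THE j. pendant i j \<in> M \<and> 1 \<le> j \<and> j \<le> c i) (free_hubs m)"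
  have f: "pendant i (f i) \<in> M \<and> 1 \<le> f i \<and> f i \<le> c i" if "i \<in> free_hubs m" for i
    using theI'[OF maximal_unique_pendant[OF max]] that by (simp add: f_def m_def)
  have "f \<in> choices m" using f by (auto simp: choices_def f_def)
  moreover have "M \<subseteq> extend m f"
  proof
    fix g assume g: "g \<in> M"
    show "g \<in> extend m f"
    proof (cases "g \<in> B")
      case True
      then show ?thesis using g by (simp add: extend_def m_def)
    next
      case False
      obtain i j where ij: "g = pendant i j" "i \<in> I" "1 \<le> j" "j \<le> c i"
        using maximal_edge_cases[OF max g False] .
      have "(i,0) \<notin> h" if "h \<in> m" for h
      proof
        assume "(i,0) \<in> h"
        then have "h \<inter> g \<noteq> {}" using ij hub_in_pendant by blast
        moreover have "h \<in> M" "h \<noteq> g" using that False by (auto simp: m_def)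
        ultimately show False using max g unfolding maximal_matching_def matching_def by blast
      qed
      then have i: "i \<in> free_hubs m" using ij by (auto simp: free_hubs_def)
      then have "j = f i" using maximal_unique_pendant[OF max] f[OF i] g ij by (auto simp: m_def)
      then show ?thesis using i ij by (auto simp: extend_def)
    qed
  qed
  moreover have "extend m f \<subseteq> M" using f by (auto simp: extend_def m_def)
  ultimately show ?thesis using that by (auto simp: m_def)
qed

lemma extend_inter_base:
  assumes "m \<subseteq> B" "f \<in> choices m"
  shows "extend m f \<inter> B = m"
proof -
  have "pendant i (f i) \<notin> B" if "i \<in> free_hubs m" for i
    using choices_range[OF assms(2) that] pendant_notin_base by blast
  then show ?thesis using assms(1) by (auto simp: extend_def)
qed

lemma extend_eq_imp_eq:
  assumes "admissible m" "admissible m'" and f: "f \<in> choices m" "f' \<in> choices m'"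
    and same: "extend m f = extend m' f'"
  shows "m = m' \<and> f = f'"
proof -
  have "m = m'"
    using extend_inter_base[OF admissible_subset[OF assms(1)] f(1)]
      extend_inter_base[OF admissible_subset[OF assms(2)] f(2)] same by simp
  have "f i = f' i" if i: "i \<in> free_hubs m" for i
  proof -
    have j: "1 \<le> f i" using choices_range[OF f(1) i] by blast
    have "pendant i (f i) \<in> extend m' f'" using same i by (auto simp: extend_def)
    moreover have "pendant i (f i) \<notin> m'"
      using pendant_notin_base[OF j] admissible_subset[OF assms(2)] by blast
    ultimately obtain i' where i': "i' \<in> free_hubs m'" "pendant i (f i) = pendant i' (f' i')"
      unfolding extend_def by blast
    then show ?thesis using pendant_eq_iff[of "f' i'" i "f i" i'] choices_range[OF f(2) i'(1)] by auto
  qed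
  moreover have "f' \<in> choices m" using f(2) \<open>m = m'\<close> by simp
  ultimately have "f = f'" using f(1) PiE_ext unfolding choices_def by blast
  with \<open>m = m'\<close> show ?thesis ..
qed

lemma inj_on_extend: "inj_on (\<lambda>(m,f). extend m f) (SIGMA m:Collect admissible. choices m)"
  unfolding inj_on_def using extend_eq_imp_eq by fastforce

lemma bij_betw_extend:
  "bij_betw (\<lambda>(m,f). extend m f) (SIGMA m:Collect admissible. choices m) {M. maximal_matching G M}"
proof (rule bij_betw_imageI[OF inj_on_extend], rule equalityI)
  show "(\<lambda>(m,f). extend m f) ` (SIGMA m:Collect admissible. choices m) \<subseteq> {M. maximal_matching G M}"
    using extend_maximal by auto
  show "{M. maximal_matching G M} \<subseteq> (\<lambda>(m,f). extend m f) ` (SIGMA m:Collect admissible. choices m)"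
  proof
    fix M assume "M \<in> {M. maximal_matching G M}"
    then have max: "maximal_matching G M" by simp
    obtain f where "f \<in> choices (M \<inter> B)" "M = extend (M \<inter> B) f"
      using maximal_eq_extend[OF max] .
    then show "M \<in> (\<lambda>(m,f). extend m f) ` (SIGMA m:Collect admissible. choices m)"
      using maximal_trace_admissible[OF max] by force
  qed
qed

lemma finite_admissible: "finite (Collect admissible)"
  using finite_B admissible_subset by (blast intro: finite_subset[of _ "Pow B"])

lemma sum_admissible_eq_sum_Pow:
  "(\<Sum>m | admissible m. g m) = (\<Sum>m\<in>Pow B. if admissible m then g m else 0)"
proof -
  have "Collect admissible = {m \<in> Pow B. admissible m}" using admissible_subset by blast
  then show ?thesis using finite_B by (simp only: sum.inter_filter finite_Pow_iff)
qed

lemma card_choices: "card (choices m) = (\<Prod>i\<in>free_hubs m. c i)"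
  by (simp add: choices_def card_PiE finite_free_hubs)

lemma card_extend:
  assumes m: "admissible m" and f: "f \<in> choices m"
  shows "card (extend m f) = card m + card (free_hubs m)"
proof -
  have "finite m" using admissible_subset[OF m] finite_B finite_subset by blast
  moreover have "m \<inter> (\<lambda>i. pendant i (f i)) ` free_hubs m = {}"
    using admissible_subset[OF m] pendant_notin_base choices_range[OF f] by blast
  moreover have "inj_on (\<lambda>i. pendant i (f i)) (free_hubs m)"
    using pendant_disjoint hub_in_pendant by (intro inj_onI) blast
  ultimately show ?thesis
    by (simp add: extend_def card_Un_disjoint finite_free_hubs card_image)
qed

lemma card_maximal_matchings:
  "card {M. maximal_matching G M} = (\<Sum>m | admissible m. \<Prod>i\<in>free_hubs m. c i)"
proof -
  have "card {M. maximal_matching G M} = card (SIGMA m:Collect admissible. choices m)"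
    using bij_betw_same_card[OF bij_betw_extend] by simp
  also have "\<dots> = (\<Sum>m | admissible m. card (choices m))"
    using finite_admissible by (simp add: choices_def finite_PiE finite_free_hubs)
  finally show ?thesis by (simp add: card_choices)
qed

lemma sum_card_maximal_matchings:
  "(\<Sum>M | maximal_matching G M. card M)
     = (\<Sum>m | admissible m. (\<Prod>i\<in>free_hubs m. c i) * (card m + card (free_hubs m)))"
proof -
  have "(\<Sum>M | maximal_matching G M. card M)
      = (\<Sum>(m,f) \<in> (SIGMA m:Collect admissible. choices m). card (extend m f))"
    using sum.reindex_bij_betw[OF bij_betw_extend, of card] by (simp add: split_def)
  also have "\<dots> = (\<Sum>m | admissible m. \<Sum>f\<in>choices m. card (extend m f))"
    using finite_admissible
    by (subst sum.Sigma) (auto simp: choices_def finite_PiE finite_free_hubs)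
  also have "\<dots> = (\<Sum>m | admissible m. card (choices m) * (card m + card (free_hubs m)))"
    by (intro sum.cong) (simp_all add: card_extend)
  finally show ?thesis by (simp add: card_choices)
qed

lemma avm_eq:
  "avm G = real (\<Sum>m | admissible m. (\<Prod>i\<in>free_hubs m. c i) * (card m + card (free_hubs m)))
         / real (\<Sum>m | admissible m. \<Prod>i\<in>free_hubs m. c i)"
  unfolding avm_def card_maximal_matchings[symmetric] sum_card_maximal_matchings[symmetric]
  by simp

end

lemma sum_Pow_insert:
  assumes "finite A" "x \<notin> A"
  shows "(\<Sum>X\<in>Pow (insert x A). g X) = (\<Sum>X\<in>Pow A. g X) + (\<Sum>X\<in>Pow A. g (insert x X))"
proof -
  have "Pow A \<inter> insert x ` Pow A = {}" using assms by auto
  moreover have "inj_on (insert x) (Pow A)" using assms unfolding inj_on_def by (auto simp: insert_ident)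
  ultimately show ?thesis
    using assms unfolding Pow_insert by (simp add: sum.union_disjoint sum.reindex)
qed

lemma pendant_graph_eq: "pendant_graph c = H_edges \<union> pendant_edges {1..4} c"
  unfolding pendant_graph_def pendant_edges_def pendant_def ..

lemma bowtie_pendant_extension: "pendant_extension H_edges {1..4}"
  by unfold_locales (auto simp: H_edges_def)

lemma atLeastAtMost_1_4_eq: "{1..4::nat} = {1,2,3,4}"
  by auto

lemma prod_free_hubs_bowtie:
  "(\<Prod>i\<in>pendant_extension.free_hubs {1..4} c m. c i)
     = (\<Prod>i\<in>{1,2,3,4}. if 0 < c i \<and> (i,0) \<notin> \<Union>m then c i else 1)"
  unfolding pendant_extension.free_hubs_def[OF bowtie_pendant_extension]
  unfolding atLeastAtMost_1_4_eq by (rule prod.inter_filter) simp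

lemma card_free_hubs_bowtie:
  "card (pendant_extension.free_hubs {1..4} c m)
     = (\<Sum>i\<in>{1,2,3,4}. if 0 < c i \<and> (i,0) \<notin> \<Union>m then 1 else 0)"
  unfolding pendant_extension.free_hubs_def[OF bowtie_pendant_extension]
  unfolding atLeastAtMost_1_4_eq card_eq_sum by (rule sum.inter_filter) simp

lemma admissible_bowtie_iff:
  "pendant_extension.admissible H_edges {1..4} c m \<longleftrightarrow>
     matching H_edges m \<and> (\<forall>e\<in>H_edges. e \<inter> (\<Union>m \<union> {(i,0) |i. i \<in> {1,2,3,4} \<and> 0 < c i}) \<noteq> {})"
  unfolding pendant_extension.admissible_def[OF bowtie_pendant_extension]
    pendant_extension.hubs_def[OF bowtie_pendant_extension]
  unfolding atLeastAtMost_1_4_eq ..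

lemmas bowtie_expand =
  pendant_extension.sum_admissible_eq_sum_Pow[OF bowtie_pendant_extension]
  prod_free_hubs_bowtie card_free_hubs_bowtie admissible_bowtie_iff

text \<open>
  Both bounds are finite computations: the sums run over the 64 subsets of the six bowtie edges,
  and splitting on which c i vanish decides the hub conditions, leaving polynomial inequalities
  in the c i with nonnegative coefficients.
\<close>

lemma avm_pendant_graph_gt:
  assumes "2 \<le> card {i\<in>{1..4::nat}. 0 < c i}"
  shows "7/3 < avm (pendant_graph c)"
proof -
  interpret pendant_extension H_edges "{1..4}" c by (rule bowtie_pendant_extension)
  define N where "N = (\<Sum>m | admissible m. \<Prod>i\<in>free_hubs m. c i)"
  define S where "S = (\<Sum>m | admissible m. (\<Prod>i\<in>free_hubs m. c i) * (card m + card (free_hubs m)))"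
  have "card {i\<in>{1..4::nat}. 0 < c i} = (\<Sum>i\<in>{1,2,3,4::nat}. if 0 < c i then 1 else 0)"
    unfolding atLeastAtMost_1_4_eq card_eq_sum by (rule sum.inter_filter) simp
  then have "0 < N \<and> 7 * N < 3 * S"
    using assms unfolding N_def S_def bowtie_expand
    by (cases "c 1"; cases "c 2"; cases "c 3"; cases "c 4")
      (simp_all add: H_edges_def sum_Pow_insert matching_def doubleton_eq_iff algebra_simps)
  then have "7/3 < real S / real N" by (simp add: field_simps)
  moreover have "avm (pendant_graph c) = real S / real N"
    unfolding pendant_graph_eq avm_eq N_def S_def ..
  ultimately show ?thesis by simp
qed

lemma avm_R33_lt: "avm (R33 n) < 7/3"
proof -
  define c where "c = (\<lambda>i::nat. if i = 1 then n - 5 else 0)"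
  interpret pendant_extension H_edges "{1..4}" c by (rule bowtie_pendant_extension)
  define N where "N = (\<Sum>m | admissible m. \<Prod>i\<in>free_hubs m. c i)"
  define S where "S = (\<Sum>m | admissible m. (\<Prod>i\<in>free_hubs m. c i) * (card m + card (free_hubs m)))"
  have "0 < N \<and> 3 * S < 7 * N"
    unfolding N_def S_def bowtie_expand unfolding c_def
    by (cases "n - 5") (simp_all add: H_edges_def sum_Pow_insert matching_def doubleton_eq_iff algebra_simps)
  then have "real S / real N < 7/3" by (simp add: field_simps)
  moreover have "avm (R33 n) = real S / real N"
    unfolding R33_def c_def[symmetric] pendant_graph_eq avm_eq N_def S_def ..
  ultimately show ?thesis by simp
qed

theorem lemma3p5:
  fixes c :: "nat \<Rightarrow> nat" and n k d :: nat
  assumes "k = (\<Sum>i\<in>{1..4}. c i)" and "k \<ge> 1"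
    and "n = card (\<Union> (pendant_graph c))"
    and "d = card {i\<in>{1..4::nat}. c i > 0}" and "1 \<le> d" and "d \<le> 4"
    and "d \<ge> 2"
  shows "avm (pendant_graph c) > avm (R33 n)"
proof -
  have "avm (R33 n) < 7/3" by (rule avm_R33_lt)
  also have "7/3 < avm (pendant_graph c)" using assms(4,7) by (intro avm_pendant_graph_gt) simp
  finally show ?thesis .
qed

end
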